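(* Let $p$ be a prime, $n\ge 1$, let $F:\mathbb{F}_{p^n}\rightarrow \mathbb{F}_{p^n}$ be any function and let $\alpha\in\mathbb{F}_{p^n}$. Then for all $x\in\mathbb{F}_{p^n}$, \[\Delta_{\underbrace{\alpha,\alpha,\dots,\alpha}_{p-1}} F(x)= -\Delta_{\alpha,2\alpha,\dots,(p-1)\alpha} F(x).\]
   Context: For $F:\mathbb{F}_{p^n}\to\mathbb{F}_{p^n}$ and $\alpha\in\mathbb{F}_{p^n}$, the (first-order) discrete derivative is $\Delta_\alpha F(x)=F(x+\alpha)-F(x)$. For directions $\alpha_1,\dots,\alpha_d\in\mathbb{F}_{p^n}$ the $d$-th order derivative is defined recursively by $\Delta_{\alpha_1,\dots,\alpha_d}F=\Delta_{\alpha_1}\Delta_{\alpha_2,\dots,\alpha_d}F$, equivalently \[\Delta_{\alpha_1,\dots,\alpha_d} F(x)=\sum_{j=0}^{d}(-1)^{d-j}\sum_{\{i_1,\dots,i_j\}\subseteq\{1,\dots,d\}}F\Big(x+\sum_{k=1}^j\alpha_{i_k}\Big).\] Here $k\alpha$ for an integer $k$ denotes the $k$-fold sum of $\alpha$. *)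

theory Defs
  imports Main "HOL-Computational_Algebra.Primes"
begin

fun ddiff :: "'a::ab_group_add list \<Rightarrow> ('a \<Rightarrow> 'a) \<Rightarrow> 'a \<Rightarrow> 'a" where
  "ddiff [] F = F"
| "ddiff (a # as) F = (\<lambda>x. ddiff as F (x + a) - ddiff as F x)"

end

theory Submission
  imports Defs "HOL-Computational_Algebra.Polynomial" "HOL-Number_Theory.Residues"
begin

text \<open>
  Let polynomials act on functions by letting \<open>X\<close> act as the shift \<open>G \<mapsto> G (\<cdot> + \<alpha>)\<close>,
  so that \<open>\<Delta>\<^bsub>k\<alpha>\<^esub>\<close> is the action of \<open>X^k - 1\<close>. The two sides are then the actions of
  \<open>(X - 1)^(p-1)\<close> and of \<open>\<Prod>\<^bsub>0<k<p\<^esub> (X^k - 1) = (X - 1)^(p-1) \<Prod>\<^bsub>0<k<p\<^esub> (1 + X + ... + X^(k-1))\<close>.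
  The last product is \<open>(p - 1)! = -1\<close> at \<open>X = 1\<close> (Wilson), so the sum of the two polynomials
  is a multiple of \<open>(X - 1)^p = X^p - 1\<close> (Frobenius), which acts as zero because \<open>p\<alpha> = 0\<close>.
\<close>

definition shift_act :: "'a::comm_ring_1 \<Rightarrow> 'a poly \<Rightarrow> ('a \<Rightarrow> 'a) \<Rightarrow> 'a \<Rightarrow> 'a" where
  "shift_act \<alpha> q G x = (\<Sum>i\<le>degree q. Polynomial.coeff q i * G (x + of_nat i * \<alpha>))"

lemma shift_act_eq_sum:
  assumes "degree q \<le> N"
  shows "shift_act \<alpha> q G x = (\<Sum>i\<le>N. Polynomial.coeff q i * G (x + of_nat i * \<alpha>))"
  unfolding shift_act_def
  by (rule sum.mono_neutral_left) (use assms in \<open>auto simp: coeff_eq_0\<close>)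

lemma shift_act_add: "shift_act \<alpha> (q + r) G x = shift_act \<alpha> q G x + shift_act \<alpha> r G x"
  using degree_add_le_max[of q r]
  by (simp add: shift_act_eq_sum[of _ "max (degree q) (degree r)"] sum.distrib algebra_simps)

lemma shift_act_diff: "shift_act \<alpha> (q - r) G x = shift_act \<alpha> q G x - shift_act \<alpha> r G x"
  using degree_diff_le_max[of q r]
  by (simp add: shift_act_eq_sum[of _ "max (degree q) (degree r)"] sum_subtractf algebra_simps)

lemma shift_act_smult: "shift_act \<alpha> (Polynomial.smult a q) G x = a * shift_act \<alpha> q G x"
  by (simp add: shift_act_eq_sum[of _ "degree q"] sum_distrib_left algebra_simps degree_smult_le)

lemma shift_act_pCons: "shift_act \<alpha> (pCons a q) G x = a * G x + shift_act \<alpha> q G (x + \<alpha>)"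
proof -
  have "shift_act \<alpha> (pCons a q) G x
      = (\<Sum>i\<le>Suc (degree q). Polynomial.coeff (pCons a q) i * G (x + of_nat i * \<alpha>))"
    by (rule shift_act_eq_sum) (simp add: degree_pCons_le)
  also have "\<dots> = a * G x + (\<Sum>i\<le>degree q. Polynomial.coeff q i * G (x + \<alpha> + of_nat i * \<alpha>))"
    by (subst sum.atMost_Suc_shift) (simp add: algebra_simps)
  finally show ?thesis
    by (simp add: shift_act_def)
qed

lemma shift_act_one: "shift_act \<alpha> 1 G x = G x"
  by (simp add: shift_act_def)

lemma shift_act_mult: "shift_act \<alpha> (q * r) G x = shift_act \<alpha> q (shift_act \<alpha> r G) x"
proof (induction q arbitrary: x rule: pCons_induct)
  case 0
  then show ?case
    by (simp add: shift_act_def)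
next
  case (pCons a q)
  have "shift_act \<alpha> (pCons a q * r) G x = shift_act \<alpha> (Polynomial.smult a r + pCons 0 (q * r)) G x"
    by simp
  also have "\<dots> = a * shift_act \<alpha> r G x + shift_act \<alpha> (q * r) G (x + \<alpha>)"
    by (simp add: shift_act_add shift_act_smult shift_act_pCons)
  also have "\<dots> = shift_act \<alpha> (pCons a q) (shift_act \<alpha> r G) x"
    by (simp add: shift_act_pCons pCons.IH)
  finally show ?case .
qed

lemma shift_act_X: "shift_act \<alpha> [:0, 1:] G x = G (x + \<alpha>)"
  by (simp add: shift_act_pCons shift_act_def)

lemma shift_act_X_power: "shift_act \<alpha> ([:0, 1:] ^ k) G x = G (x + of_nat k * \<alpha>)"
proof (induction k arbitrary: x)
  case 0
  then show ?case
    by (simp add: shift_act_one)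
next
  case (Suc k)
  have "shift_act \<alpha> ([:0, 1:] ^ Suc k) G x = G (x + \<alpha> + of_nat k * \<alpha>)"
    by (simp only: power_Suc shift_act_mult shift_act_X Suc.IH)
  then show ?case
    by (simp add: algebra_simps)
qed

lemma ddiff_eq_shift_act:
  "ddiff (map (\<lambda>k. of_nat k * \<alpha>) ks) F x = shift_act \<alpha> (\<Prod>k\<leftarrow>ks. [:0, 1:] ^ k - 1) F x"
  by (induction ks arbitrary: x) (simp_all add: shift_act_one shift_act_mult shift_act_diff shift_act_X_power)

lemma ddiff_replicate_eq_shift_act:
  "ddiff (replicate m \<alpha>) F x = shift_act \<alpha> (([:0, 1:] - 1) ^ m) F x"
  using ddiff_eq_shift_act[of \<alpha> "replicate m 1" F x] by simp

lemma shift_act_eq_0_if_dvd: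
  assumes "[:0, 1:] ^ m - 1 dvd q" and "of_nat m * \<alpha> = 0"
  shows "shift_act \<alpha> q G x = 0"
proof -
  from assms(1) obtain r where "q = ([:0, 1:] ^ m - 1) * r" ..
  with assms(2) show ?thesis
    by (simp add: shift_act_mult shift_act_diff shift_act_X_power shift_act_one)
qed

lemma of_nat_fact_CHAR_minus_one:
  assumes "prime CHAR('a::comm_ring_1)"
  shows "of_nat (fact (CHAR('a) - 1)) = (-1 :: 'a)"
proof -
  have "[int (fact (CHAR('a) - 1)) = - 1] (mod int CHAR('a))"
    using wilson_theorem[OF assms] by (simp only: of_nat_fact)
  then have "of_int (int (fact (CHAR('a) - 1))) = (of_int (-1) :: 'a)"
    by (simp only: of_int_eq_iff_cong_CHAR)
  then show ?thesis
    by (simp only: of_int_of_nat_eq of_int_minus of_int_1)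
qed

lemma X_minus_one_power_CHAR:
  assumes "prime CHAR('a::comm_ring_1)"
  shows "([:0, 1:] - 1) ^ CHAR('a) = [:0, 1:] ^ CHAR('a) - (1 :: 'a poly)"
proof -
  have "([:0, 1:] + (- 1 :: 'a poly)) ^ CHAR('a) = [:0, 1:] ^ CHAR('a) + (- 1) ^ CHAR('a)"
    by (rule freshmans_dream) (use assms in simp_all)
  also have "(- 1 :: 'a poly) ^ CHAR('a) = - (1 ^ CHAR('a))"
    by (rule minus_power_prime_CHAR) (use assms in simp_all)
  finally show ?thesis
    by simp
qed

lemma X_power_CHAR_minus_one_dvd:
  fixes X :: "'a::comm_ring_1 poly"
  defines "X \<equiv> [:0, 1:]"
  assumes "prime CHAR('a)"
  shows "X ^ CHAR('a) - 1 dvd (\<Prod>k\<in>{1..<CHAR('a)}. X ^ k - 1) + (X - 1) ^ (CHAR('a) - 1)"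
proof -
  let ?p = "CHAR('a)"
  define S where "S = (\<Prod>k\<in>{1..<?p}. \<Sum>i<k. X ^ i)"
  have factor: "(\<Prod>k\<in>{1..<?p}. X ^ k - 1) = (X - 1) ^ (?p - 1) * S"
    by (simp add: S_def power_diff_1_eq prod.distrib)
  have p_pos: "?p > 0"
    using assms(2) by (rule prime_gt_0_nat)
  then have "{1..<?p} = {1..?p - 1}"
    by auto
  then have "poly S 1 = (\<Prod>k\<in>{1..?p - 1}. of_nat k)"
    by (simp add: S_def X_def poly_prod poly_sum)
  also have "\<dots> = -1"
    using of_nat_fact_CHAR_minus_one[OF assms(2)] by (simp add: fact_prod)
  finally have "poly (S + 1) 1 = 0"
    by simp
  moreover have "X - 1 = [:- 1, 1:]"
    by (simp add: X_def one_pCons)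
  ultimately obtain R where R: "S + 1 = (X - 1) * R"
    by (metis poly_eq_0_iff_dvd dvdE)
  have "(\<Prod>k\<in>{1..<?p}. X ^ k - 1) + (X - 1) ^ (?p - 1) = (X - 1) ^ (?p - 1) * (S + 1)"
    unfolding factor by (simp add: distrib_left)
  also have "\<dots> = (X - 1) ^ ?p * R"
    by (simp only: R mult.assoc[symmetric] power_minus_mult[OF p_pos])
  also have "\<dots> = (X ^ ?p - 1) * R"
    using X_minus_one_power_CHAR[OF assms(2)] by (simp add: X_def)
  finally show ?thesis
    by simp
qed

lemma CHAR_eq_if_card_prime_power:
  assumes "prime p" and "card (UNIV :: 'a::{idom,finite} set) = p ^ n"
  shows "CHAR('a) = p"
proof -
  have "prime CHAR('a)"
    by (intro prime_CHAR_semidom finite_imp_CHAR_pos) simp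
  moreover have "CHAR('a) dvd p ^ n"
    using CHAR_dvd_CARD[where 'a='a] assms(2) by simp
  ultimately show ?thesis
    using assms(1) by (metis prime_dvd_power primes_dvd_imp_eq)
qed

theorem lemma1:
  fixes F :: "'a::{field,finite} \<Rightarrow> 'a" and \<alpha> x :: 'a and p n :: nat
  assumes "prime p" and "n \<ge> 1" and "card (UNIV :: 'a set) = p ^ n"
  shows "ddiff (replicate (p - 1) \<alpha>) F x
           = - ddiff (map (\<lambda>k. of_nat k * \<alpha>) [1..<p]) F x"
proof -
  have char: "CHAR('a) = p"
    using assms(1,3) by (rule CHAR_eq_if_card_prime_power)
  then have "of_nat p * \<alpha> = 0"
    by (metis of_nat_CHAR mult_zero_left)
  with X_power_CHAR_minus_one_dvd[where 'a='a] assms(1) char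
  have "shift_act \<alpha> ((\<Prod>k\<in>{1..<p}. [:0, 1:] ^ k - 1) + ([:0, 1:] - 1) ^ (p - 1)) F x = 0"
    by (intro shift_act_eq_0_if_dvd) auto
  moreover have "ddiff (map (\<lambda>k. of_nat k * \<alpha>) [1..<p]) F x
      = shift_act \<alpha> (\<Prod>k\<in>{1..<p}. [:0, 1:] ^ k - 1) F x"
    by (simp add: ddiff_eq_shift_act flip: prod.distinct_set_conv_list)
  ultimately show ?thesis
    by (simp add: shift_act_add ddiff_replicate_eq_shift_act eq_neg_iff_add_eq_0 add.commute)
qed

end
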